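(* Fix an integer $n\ge 0$. Let $\mu,\nu,\lambda$ be partitions such that $\ell(\mu)>n$, $\ell(\nu)>n$, the border strip $R_\mu$ exists, is nonempty, and $\nu=\mu\setminus R_\mu$, and the border strip $R_\nu$ exists, is nonempty, and $\lambda=\nu\setminus R_\nu$. Then $c(R_\mu)>c(R_\nu)$.
   Context: For a partition $\lambda$ with $\ell(\lambda)>n$ (where $\ell$ is the number of nonzero parts), $R_\lambda$ denotes the border strip (connected skew Young diagram containing no $2\times2$ square) consisting of $2(\ell(\lambda)-n-1)$ boxes along the rim (south-east boundary) of the Young diagram of $\lambda$, starting at the first (leftmost) box of the last row of $\lambda$ and proceeding along the rim, if it exists. $c(R)$ denotes the number of columns occupied by a border strip $R$. *)

theory Defs
  imports Main
begin

text \<open>Boxes of the Young diagram are pairs (row, column),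
  0-indexed, English convention (row 0 on top).\<close>

definition is_partition :: "nat list \<Rightarrow> bool" where
  "is_partition l \<longleftrightarrow> sorted_wrt (\<ge>) l \<and> 0 \<notin> set l"

definition young :: "nat list \<Rightarrow> (nat \<times> nat) set" where
  "young l = {(i, j). i < length l \<and> j < l ! i}"

text \<open>One step along the rim (south-east boundary), going from the bottom-left
  box towards the top-right box: move right if possible, otherwise move up.\<close>

definition rim_next :: "nat list \<Rightarrow> nat \<times> nat \<Rightarrow> nat \<times> nat" where
  "rim_next l = (\<lambda>(i, j). if j + 1 < l ! i then (i, j + 1) else (i - 1, j))"

definition rim_box :: "nat list \<Rightarrow> nat \<Rightarrow> nat \<times> nat" where
  "rim_box l m = (rim_next l ^^ m) (length l - 1, 0)"

text \<open>Total number of boxes on the rim (hook length of the box (0,0)).\<close>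

definition rim_length :: "nat list \<Rightarrow> nat" where
  "rim_length l = (if l = [] then 0 else hd l + length l - 1)"

text \<open>R_lambda (for a given n): the first 2(ell(lambda)-n-1) rim boxes; it exists
  iff the rim has at least that many boxes.\<close>

definition strip_size :: "nat list \<Rightarrow> nat \<Rightarrow> nat" where
  "strip_size l n = 2 * (length l - n - 1)"

definition strip_exists :: "nat list \<Rightarrow> nat \<Rightarrow> bool" where
  "strip_exists l n \<longleftrightarrow> strip_size l n \<le> rim_length l"

definition R_strip :: "nat list \<Rightarrow> nat \<Rightarrow> (nat \<times> nat) set" where
  "R_strip l n = rim_box l ` {..< strip_size l n}"

definition ncols :: "(nat \<times> nat) set \<Rightarrow> nat" where
  "ncols R = card (snd ` R)"

end

theory Submission
  imports Defs
begin

text \<open>Walking along the rim, every step either moves one column right or one row up, so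
  i + m = j + \<ell>(\<lambda>) - 1 for the m-th rim box (i, j), and the strip R covers the columns
  0, ..., j of its last box (i, j). If removing R leaves a Young diagram, the last box
  must end its row i, so c(R) = \<lambda>_i. Write a and a' for the rows in which R_\<mu> and R_\<nu>
  end. If a' < a, the index relation with |R| = 2(\<ell> - n - 1) and \<ell>(\<nu>) \<le> \<ell>(\<mu>) gives
  c(R_\<mu>) - c(R_\<nu>) = (\<ell>(\<mu>) - \<ell>(\<nu>)) + (a - a') > 0. Otherwise
  c(R_\<nu>) = \<nu>_a' \<le> \<nu>_a < \<mu>_a = c(R_\<mu>), since R_\<mu> removed the last box of row a of \<mu>.\<close>

lemma rim_box_0 [simp]: "rim_box l 0 = (length l - 1, 0)"
  by (simp add: rim_box_def)

lemma rim_box_Suc: "rim_box l (Suc m) = rim_next l (rim_box l m)"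
  by (simp add: rim_box_def)

lemma snd_rim_box_Suc:
  "snd (rim_box l (Suc m)) = snd (rim_box l m) \<or> snd (rim_box l (Suc m)) = Suc (snd (rim_box l m))"
  by (cases "rim_box l m") (simp add: rim_box_Suc rim_next_def)

lemma snd_image_rim_box: "snd ` rim_box l ` {..<Suc k} = {0..snd (rim_box l k)}"
proof (induction k)
  case 0
  have "{..<Suc 0} = {0::nat}" by auto
  then show ?case by simp
next
  case (Suc k)
  have "{..<Suc (Suc k)} = insert (Suc k) {..<Suc k}" by auto
  then have "snd ` rim_box l ` {..<Suc (Suc k)} = insert (snd (rim_box l (Suc k))) {0..snd (rim_box l k)}"
    using Suc by simp
  then show ?case using snd_rim_box_Suc[of l k] by auto
qed

lemma partition_nth_pos: "is_partition l \<Longrightarrow> i < length l \<Longrightarrow> 0 < l ! i"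
  unfolding is_partition_def using nth_mem by (metis gr0I)

lemma partition_nth_antimono: "is_partition l \<Longrightarrow> i \<le> j \<Longrightarrow> j < length l \<Longrightarrow> l ! j \<le> l ! i"
  unfolding is_partition_def by (metis le_neq_implies_less order_refl sorted_wrt_nth_less)

lemma last_row_in_young: "is_partition l \<Longrightarrow> l \<noteq> [] \<Longrightarrow> (length l - 1, 0) \<in> young l"
  using partition_nth_pos[of l "length l - 1"] by (simp add: young_def)

lemma length_le_if_young_subset:
  assumes "is_partition l'" "young l' \<subseteq> young l"
  shows "length l' \<le> length l"
proof (cases "l' = []")
  case False
  then have "(length l' - 1, 0) \<in> young l" using last_row_in_young assms by blast
  then show ?thesis by (simp add: young_def) linarith
qed simp

lemma rim_box_invariant:
  assumes "is_partition l" "l \<noteq> []" "m < rim_length l"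
  shows "rim_box l m \<in> young l \<and> fst (rim_box l m) + m = snd (rim_box l m) + length l - 1"
  using assms(3)
proof (induction m)
  case 0
  then show ?case using last_row_in_young[OF assms(1,2)] assms(2) by simp
next
  case (Suc m)
  obtain i j where ij: "rim_box l m = (i, j)" by fastforce
  have IH: "(i, j) \<in> young l" "i + m = j + length l - 1" using Suc ij by auto
  have iL: "i < length l" "j < l ! i" using IH(1) by (auto simp: young_def)
  show ?case
  proof (cases "j + 1 < l ! i")
    case True
    then show ?thesis using IH iL ij by (simp add: rim_box_Suc rim_next_def young_def)
  next
    case False
    have "i \<noteq> 0"
    proof
      assume "i = 0"
      then have "hd l = l ! i" using assms(2) by (simp add: hd_conv_nth)
      then show False using Suc.prems False IH iL \<open>i = 0\<close> assms(2)
        by (simp add: rim_length_def)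
    qed
    then have "l ! i \<le> l ! (i - 1)" using partition_nth_antimono[OF assms(1), of "i - 1" i] iL by simp
    then show ?thesis using False IH iL ij \<open>i \<noteq> 0\<close>
      by (simp add: rim_box_Suc rim_next_def young_def) arith
  qed
qed

definition strip_end :: "nat list \<Rightarrow> nat \<Rightarrow> nat \<times> nat" where
  "strip_end l n = rim_box l (strip_size l n - 1)"

lemma R_strip_eq:
  "R_strip l n \<noteq> {} \<Longrightarrow> R_strip l n = rim_box l ` {..<Suc (strip_size l n - 1)}"
  by (auto simp: R_strip_def)

lemma strip_end_in_R_strip: "R_strip l n \<noteq> {} \<Longrightarrow> strip_end l n \<in> R_strip l n"
  by (subst R_strip_eq) (auto simp: strip_end_def)

lemma ncols_R_strip: "R_strip l n \<noteq> {} \<Longrightarrow> ncols (R_strip l n) = Suc (snd (strip_end l n))"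
  by (simp add: R_strip_eq ncols_def snd_image_rim_box strip_end_def)

lemma R_strip_invariant:
  assumes "is_partition l" "strip_exists l n" "x \<in> R_strip l n"
  shows "\<exists>m < strip_size l n. x = rim_box l m \<and> x \<in> young l
           \<and> fst x + m = snd x + length l - 1"
proof -
  obtain m where m: "m < strip_size l n" "x = rim_box l m" using assms(3) by (auto simp: R_strip_def)
  then have "m < rim_length l" using assms(2) by (simp add: strip_exists_def)
  moreover then have "l \<noteq> []" by (auto simp: rim_length_def)
  ultimately show ?thesis using rim_box_invariant[OF assms(1)] m by blast
qed

lemma strip_end_index:
  assumes "is_partition l" "strip_exists l n" "R_strip l n \<noteq> {}"
  shows "fst (strip_end l n) + strip_size l n = snd (strip_end l n) + length l"
proof -
  obtain k where k: "strip_size l n = Suc k" "Suc k \<le> rim_length l"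
    using assms(2,3) by (cases "strip_size l n") (auto simp: R_strip_def strip_exists_def)
  then have "l \<noteq> []" by (auto simp: rim_length_def)
  then show ?thesis
    using rim_box_invariant[OF assms(1), of k] k by (simp add: strip_end_def)
qed

text \<open>The box right of the last box of R is not in R (its index would be too large),
  so if it lay in the diagram, removing R would leave a hole in that row.\<close>

lemma strip_end_ends_row:
  assumes "is_partition l" "strip_exists l n" "R_strip l n \<noteq> {}"
    and "young l' = young l - R_strip l n"
  shows "Suc (snd (strip_end l n)) = l ! fst (strip_end l n)"
proof -
  obtain a b where ab: "strip_end l n = (a, b)" by fastforce
  have abR: "(a, b) \<in> R_strip l n" using strip_end_in_R_strip[OF assms(3)] ab by simp
  have "(a, b) \<in> young l" "a + strip_size l n = b + length l"
    using R_strip_invariant[OF assms(1,2) abR] strip_end_index[OF assms(1-3)] ab by auto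
  have "(a, Suc b) \<notin> R_strip l n"
  proof
    assume "(a, Suc b) \<in> R_strip l n"
    with R_strip_invariant[OF assms(1,2)] obtain m where
      "m < strip_size l n" "a + m = Suc b + length l - 1" "(a, Suc b) \<in> young l"
      by fastforce
    then show False using \<open>a + strip_size l n = b + length l\<close> by (simp add: young_def)
  qed
  moreover have "(a, b) \<notin> young l'" using abR assms(4) by simp
  then have "(a, Suc b) \<notin> young l'" by (auto simp: young_def)
  ultimately have "(a, Suc b) \<notin> young l" using assms(4) by blast
  then show ?thesis using \<open>(a, b) \<in> young l\<close> ab by (simp add: young_def)
qed

theorem lemma2p1:
  fixes n :: nat and mu nu lam :: "nat list"
  assumes "is_partition mu" and "is_partition nu" and "is_partition lam"
    and "length mu > n" and "length nu > n"
    and "strip_exists mu n" and "R_strip mu n \<noteq> {}"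
    and "young nu = young mu - R_strip mu n"
    and "strip_exists nu n" and "R_strip nu n \<noteq> {}"
    and "young lam = young nu - R_strip nu n"
  shows "ncols (R_strip mu n) > ncols (R_strip nu n)"
proof -
  obtain a b where ab: "strip_end mu n = (a, b)" by fastforce
  obtain a' b' where ab': "strip_end nu n = (a', b')" by fastforce
  have mu_end: "Suc b = mu ! a" "a + strip_size mu n = b + length mu"
    using strip_end_ends_row[OF assms(1,6-8)] strip_end_index[OF assms(1,6,7)] ab by auto
  have nu_end: "Suc b' = nu ! a'" "a' + strip_size nu n = b' + length nu" "a' < length nu"
    using strip_end_ends_row[OF assms(2,9-11)] strip_end_index[OF assms(2,9,10)]
      R_strip_invariant[OF assms(2,9) strip_end_in_R_strip[OF assms(10)]] ab'
    by (auto simp: young_def)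
  have "length nu \<le> length mu"
    using length_le_if_young_subset[OF assms(2)] assms(8) by blast
  moreover have "b' < b" if "a \<le> a'"
  proof -
    have "(a, b) \<notin> young nu" using strip_end_in_R_strip[OF assms(7)] ab assms(8) by simp
    then have "nu ! a \<le> b" using that nu_end(3) by (simp add: young_def)
    moreover have "nu ! a' \<le> nu ! a" using partition_nth_antimono[OF assms(2) that nu_end(3)] .
    ultimately show ?thesis using nu_end(1) by simp
  qed
  ultimately have "b' < b"
    using mu_end(2) nu_end(2) assms(4,5) by (cases "a \<le> a'") (auto simp: strip_size_def)
  then show ?thesis using ncols_R_strip assms(7,10) ab ab' by simp
qed

end
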